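(* Let $n>1$ and $m\in\mathbb{N}$, let $\mathcal{Q}_m=\bigoplus_{t=0}^mH_t\subseteq H^2(\mathbb{T}^n)$, and let $p=\sum_{|k|=m}a_kz^k\in H_m$ be a homogeneous polynomial of degree $m$ with $\|p\|_2=1$. If $a_k\neq0$ and $a_l\neq0$ for some $k\neq l$ in $\mathbb{Z}_+^n$, then $S_p=P_{\mathcal{Q}_m}T_p|_{\mathcal{Q}_m}$ is not liftable, i.e. there is no $\varphi\in\mathcal{S}(\mathbb{D}^n)$ with $S_p=P_{\mathcal{Q}_m}T_\varphi|_{\mathcal{Q}_m}$.
   Context: $H_t$ is the space of homogeneous polynomials of degree $t$ in $z_1,\dots,z_n$, viewed inside the Hardy space $H^2(\mathbb{T}^n)$ with norm $\|\cdot\|_2$; $|k|=k_1+\dots+k_n$. $T_\varphi f=\varphi f$, $P_{\mathcal{Q}_m}$ the orthogonal projection onto $\mathcal{Q}_m$, $\mathcal{S}(\mathbb{D}^n)$ the closed unit ball of $H^\infty(\mathbb{D}^n)$. *)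

theory Defs
  imports "HOL-Analysis.Analysis"
begin

text \<open>Multi-indices in Z_+^n are functions 'n => nat over a finite index type 'n
 (CARD('n) = n). Elements of H^2(T^n) / H^infty(D^n) are represented by their
 Taylor coefficient families ('n => nat) => complex.\<close>

definition mdeg :: "('n::finite \<Rightarrow> nat) \<Rightarrow> nat" where
  "mdeg k = (\<Sum>i\<in>UNIV. k i)"

definition Qspace :: "nat \<Rightarrow> (('n::finite \<Rightarrow> nat) \<Rightarrow> complex) set" where
  "Qspace m = {f. \<forall>k. m < mdeg k \<longrightarrow> f k = 0}"

definition Hhom :: "nat \<Rightarrow> (('n::finite \<Rightarrow> nat) \<Rightarrow> complex) set" where
  "Hhom m = {f. \<forall>k. mdeg k \<noteq> m \<longrightarrow> f k = 0}"

definition h2norm_poly :: "nat \<Rightarrow> (('n::finite \<Rightarrow> nat) \<Rightarrow> complex) \<Rightarrow> real" where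
  "h2norm_poly m f = sqrt (\<Sum>k\<in>{k. mdeg k \<le> m}. (cmod (f k))\<^sup>2)"

definition monom_val :: "('n::finite \<Rightarrow> complex) \<Rightarrow> ('n \<Rightarrow> nat) \<Rightarrow> complex" where
  "monom_val z k = (\<Prod>i\<in>UNIV. z i ^ k i)"

text \<open>Schur class S(D^n): holomorphic functions on the open polydisc (given by their
 power series, which converges absolutely on D^n) with sup norm at most 1.\<close>
definition schur_class :: "(('n::finite \<Rightarrow> nat) \<Rightarrow> complex) \<Rightarrow> bool" where
  "schur_class c \<longleftrightarrow> (\<forall>z::'n \<Rightarrow> complex. (\<forall>i. cmod (z i) < 1) \<longrightarrow>
      (\<lambda>k. cmod (c k * monom_val z k)) summable_on UNIV \<and>
      cmod (infsum (\<lambda>k. c k * monom_val z k) UNIV) \<le> 1)"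

definition mult_coeff :: "(('n::finite \<Rightarrow> nat) \<Rightarrow> complex) \<Rightarrow> (('n \<Rightarrow> nat) \<Rightarrow> complex)
    \<Rightarrow> ('n \<Rightarrow> nat) \<Rightarrow> complex" where
  "mult_coeff c f k = (\<Sum>j\<in>{j. \<forall>i. j i \<le> k i}. c j * f (\<lambda>i. k i - j i))"

text \<open>P_{Q_m} T_c |_{Q_m} = P_{Q_m} T_d |_{Q_m}, as equality of coefficient families.\<close>
definition same_compression :: "nat \<Rightarrow> (('n::finite \<Rightarrow> nat) \<Rightarrow> complex)
    \<Rightarrow> (('n \<Rightarrow> nat) \<Rightarrow> complex) \<Rightarrow> bool" where
  "same_compression m c d \<longleftrightarrow> (\<forall>f \<in> Qspace m. \<forall>k. mdeg k \<le> m \<longrightarrow>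
      mult_coeff c f k = mult_coeff d f k)"

end

theory Submission
  imports Defs "HOL-Complex_Analysis.Cauchy_Integral_Formula"
begin

text \<open>
  Testing both compressions on the constant 1 shows that a lifting \<open>\<phi>\<close> of \<open>S\<^sub>p\<close> has the
  Taylor coefficients of \<open>p\<close> in all degrees \<open>\<le> m\<close>, so \<open>p\<close> is the degree-\<open>m\<close> homogeneous
  part of \<open>\<phi>\<close>. The Cauchy estimate for the slice \<open>z \<mapsto> \<phi>(z w)\<close> bounds every homogeneous
  part of a Schur function by 1 on the torus; hence \<open>|p| \<le> 1\<close> on the torus although
  \<open>\<parallel>p\<parallel>\<^sub>2 = 1\<close>. A Kronecker substitution \<open>w\<^sub>i = \<zeta>^(N^i)\<close> turns \<open>p\<close> into a one-variable
  polynomial with the same coefficients at distinct exponents. Averaging \<open>|p|\<^sup>2\<close> over the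
  \<open>M\<close>-th roots of unity (\<open>M\<close> large) gives \<open>\<parallel>p\<parallel>\<^sub>2\<^sup>2 = 1\<close>, so \<open>|p| = 1\<close> at every root;
  averaging \<open>|p|\<^sup>2 \<zeta>^(-D)\<close> instead, with \<open>D\<close> the gap between the extreme exponents,
  then gives \<open>a\<^sub>k\<^sub>x conj(a\<^sub>k\<^sub>n) = 0\<close> unless \<open>D = 0\<close>, i.e. unless \<open>p\<close> is a monomial.
\<close>

section \<open>Coefficients of bounded power series\<close>

lemma power_series_coeff_bound:
  fixes G :: "nat \<Rightarrow> complex"
  assumes summable: "\<And>z. cmod z < 1 \<Longrightarrow> summable (\<lambda>t. G t * z ^ t)"
    and bounded: "\<And>z. cmod z < 1 \<Longrightarrow> cmod (\<Sum>t. G t * z ^ t) \<le> B"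
  shows "cmod (G t) \<le> B"
proof -
  define F where "F = Abs_fps G"
  have radius: "fps_conv_radius F \<ge> 1"
    unfolding fps_conv_radius_def F_def
    by (rule conv_radius_geI_ex') (simp add: summable)
  have bound_\<rho>: "cmod (G t) * \<rho> ^ t \<le> B" if \<rho>: "0 < \<rho>" "\<rho> < 1" for \<rho> :: real
  proof -
    have disc: "cball 0 \<rho> \<subseteq> eball (0::complex) (fps_conv_radius F)"
    proof
      fix x :: complex assume "x \<in> cball 0 \<rho>"
      then have "ereal (cmod x) < 1" using \<rho> by simp
      then show "x \<in> eball 0 (fps_conv_radius F)" using order_less_le_trans[OF _ radius] by simp
    qed
    have cauchy: "cmod ((deriv ^^ t) (eval_fps F) 0) \<le> fact t * B / \<rho> ^ t"
    proof (rule Cauchy_inequality)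
      show "eval_fps F holomorphic_on ball 0 \<rho>"
        using disc by (intro holomorphic_on_eval_fps) auto
      show "continuous_on (cball 0 \<rho>) (eval_fps F)"
        using continuous_on_eval_fps disc by (rule continuous_on_subset)
      show "cmod (eval_fps F x) \<le> B" if "cmod (0 - x) = \<rho>" for x
        using bounded[of x] that \<rho> by (simp add: eval_fps_def F_def)
    qed fact
    have coeff: "G t = (deriv ^^ t) (eval_fps F) 0 / fact t"
    proof -
      have "0 < fps_conv_radius F" using radius by (rule order_less_le_trans[rotated]) simp
      then show ?thesis using fps_nth_conv_deriv[of F t] by (simp add: F_def)
    qed
    have "cmod (G t) \<le> B / \<rho> ^ t"
      using cauchy unfolding coeff norm_divide by (simp add: divide_le_eq mult.commute)
    then show ?thesis
      using \<rho> by (simp add: field_simps)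
  qed
  have "((\<lambda>\<rho>::real. cmod (G t) * \<rho> ^ t) \<longlongrightarrow> cmod (G t) * 1 ^ t) (at_left 1)"
    by (intro tendsto_intros)
  moreover have "eventually (\<lambda>\<rho>::real. cmod (G t) * \<rho> ^ t \<le> B) (at_left 1)"
    using eventually_at_left_real[of 0 "1::real"] by (rule eventually_mono) (use bound_\<rho> in auto)
  ultimately show ?thesis
    using tendsto_upperbound by fastforce
qed

section \<open>Multi-indices and compressions\<close>

lemma finite_pointwise_le: "finite {j::'n::finite \<Rightarrow> nat. \<forall>i. j i \<le> k i}"
proof (rule finite_subset)
  show "{j::'n \<Rightarrow> nat. \<forall>i. j i \<le> k i} \<subseteq> Pi\<^sub>E UNIV (\<lambda>i. {..k i})"
    by (auto simp: PiE_UNIV_domain)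
qed (rule finite_PiE, auto)

lemma le_mdeg: "k i \<le> mdeg k"
  unfolding mdeg_def by (rule member_le_sum) auto

lemma finite_mdeg_le: "finite {k::'n::finite \<Rightarrow> nat. mdeg k \<le> m}"
  by (rule finite_subset[OF _ finite_pointwise_le[of "\<lambda>_. m"]]) (auto intro: order_trans[OF le_mdeg])

lemma finite_mdeg_eq: "finite {k::'n::finite \<Rightarrow> nat. mdeg k = m}"
  by (rule finite_subset[OF _ finite_mdeg_le[of m]]) auto

definition one_coeffs :: "('n::finite \<Rightarrow> nat) \<Rightarrow> complex" where
  "one_coeffs j = (if j = (\<lambda>_. 0) then 1 else 0)"

lemma one_coeffs_in_Qspace: "one_coeffs \<in> Qspace m"
  by (auto simp: Qspace_def one_coeffs_def mdeg_def)

lemma mult_coeff_one_coeffs: "mult_coeff c one_coeffs k = c k"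
proof -
  have "c j * one_coeffs (\<lambda>i. k i - j i) = (if j = k then c k else 0)"
    if "\<forall>i. j i \<le> k i" for j
  proof (cases "j = k")
    case False
    then obtain i where "j i \<noteq> k i"
      by auto
    with that have "k i - j i \<noteq> 0"
      by (metis diff_is_0_eq le_antisym)
    with False show ?thesis
      by (auto simp: one_coeffs_def fun_eq_iff)
  qed (simp add: one_coeffs_def)
  then have "mult_coeff c one_coeffs k = (\<Sum>j\<in>{j. \<forall>i. j i \<le> k i}. if j = k then c k else 0)"
    unfolding mult_coeff_def by (intro sum.cong) auto
  also have "\<dots> = c k"
    using finite_pointwise_le[of k] by simp
  finally show ?thesis .
qed

lemma same_compression_coeff_eq:
  assumes "same_compression m a c" and "mdeg k \<le> m"
  shows "c k = a k"
proof -
  have "mult_coeff a one_coeffs k = mult_coeff c one_coeffs k"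
    using assms one_coeffs_in_Qspace unfolding same_compression_def by blast
  then show ?thesis
    by (simp add: mult_coeff_one_coeffs)
qed

section \<open>Homogeneous parts of Schur functions\<close>

lemma monom_val_scale: "monom_val (\<lambda>i. z * w i) k = z ^ mdeg k * monom_val w k"
  unfolding monom_val_def mdeg_def by (simp add: power_mult_distrib prod.distrib power_sum)

lemma sums_homogeneous_parts:
  fixes c :: "('n::finite \<Rightarrow> nat) \<Rightarrow> complex"
  assumes "(\<lambda>k. c k * monom_val (\<lambda>i. z * w i) k) summable_on UNIV"
  shows "(\<lambda>t. (\<Sum>k | mdeg k = t. c k * monom_val w k) * z ^ t) sums
           (\<Sum>\<^sub>\<infinity>k. c k * monom_val (\<lambda>i. z * w i) k)"
proof -
  define f where "f = (\<lambda>k. c k * monom_val (\<lambda>i. z * w i) k)"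
  have "(f has_sum (\<Sum>\<^sub>\<infinity>k. f k)) UNIV"
    using assms by (simp add: f_def)
  also have "?this \<longleftrightarrow> ((\<lambda>p. f (snd p)) has_sum (\<Sum>\<^sub>\<infinity>k. f k)) (SIGMA t:UNIV. {k. mdeg k = t})"
    by (rule has_sum_reindex_bij_witness[where i = snd and j = "\<lambda>k. (mdeg k, k)"]) auto
  finally have "((\<lambda>t. \<Sum>k | mdeg k = t. f k) has_sum (\<Sum>\<^sub>\<infinity>k. f k)) UNIV"
    by (rule has_sum_SigmaD) (auto intro: has_sum_finite finite_mdeg_eq)
  moreover have "(\<Sum>k | mdeg k = t. f k) = (\<Sum>k | mdeg k = t. c k * monom_val w k) * z ^ t" for t
    unfolding f_def monom_val_scale sum_distrib_right by (rule sum.cong) auto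
  ultimately show ?thesis
    unfolding f_def by (auto dest: has_sum_imp_sums)
qed

lemma schur_class_homogeneous_part_bound:
  fixes c :: "('n::finite \<Rightarrow> nat) \<Rightarrow> complex"
  assumes "schur_class c" and "\<And>i. cmod (w i) \<le> 1"
  shows "cmod (\<Sum>k | mdeg k = t. c k * monom_val w k) \<le> 1"
proof (rule power_series_coeff_bound)
  fix z :: complex assume z: "cmod z < 1"
  have "cmod (z * w i) \<le> cmod z" for i
    using assms(2) by (simp add: norm_mult mult_left_le)
  then have "\<forall>i. cmod (z * w i) < 1"
    using z order.strict_trans1 by blast
  then have abs_summable: "(\<lambda>k. cmod (c k * monom_val (\<lambda>i. z * w i) k)) summable_on UNIV"
    and bound: "cmod (\<Sum>\<^sub>\<infinity>k. c k * monom_val (\<lambda>i. z * w i) k) \<le> 1"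
    using assms(1) unfolding schur_class_def by auto
  from abs_summable have "(\<lambda>k. c k * monom_val (\<lambda>i. z * w i) k) summable_on UNIV"
    by (rule abs_summable_summable)
  then have "(\<lambda>t. (\<Sum>k | mdeg k = t. c k * monom_val w k) * z ^ t) sums
               (\<Sum>\<^sub>\<infinity>k. c k * monom_val (\<lambda>i. z * w i) k)"
    by (rule sums_homogeneous_parts)
  then show "summable (\<lambda>t. (\<Sum>k | mdeg k = t. c k * monom_val w k) * z ^ t)"
    and "cmod (\<Sum>t. (\<Sum>k | mdeg k = t. c k * monom_val w k) * z ^ t) \<le> 1"
    using bound by (auto simp: sums_iff)
qed

lemma same_compression_torus_bound:
  assumes "schur_class c" and "same_compression m a c" and "a \<in> Hhom m"
    and "\<And>i. cmod (w i) \<le> 1"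
  shows "cmod (\<Sum>k | mdeg k \<le> m. a k * monom_val w k) \<le> 1"
proof -
  have "(\<Sum>k | mdeg k \<le> m. a k * monom_val w k) = (\<Sum>k | mdeg k = m. c k * monom_val w k)"
    using assms(3) same_compression_coeff_eq[OF assms(2)]
    by (intro sum.mono_neutral_cong_right finite_mdeg_le) (auto simp: Hhom_def)
  also have "cmod \<dots> \<le> 1"
    using assms(1,4) by (rule schur_class_homogeneous_part_bound)
  finally show ?thesis .
qed

section \<open>Roots of unity\<close>

definition unit_root :: "nat \<Rightarrow> nat \<Rightarrow> complex" where
  "unit_root M j = cis (2 * pi * real j / real M)"

lemma norm_unit_root [simp]: "cmod (unit_root M j) = 1"
  by (simp add: unit_root_def)

lemma unit_root_mult_cnj [simp]: "unit_root M j * cnj (unit_root M j) = 1"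
  using complex_norm_square[of "unit_root M j"] by simp

lemma sum_unit_root_power:
  assumes "d < M"
  shows "(\<Sum>j<M. unit_root M j ^ d) = (if d = 0 then of_nat M else 0)"
proof (cases "d = 0")
  case False
  define \<omega> where "\<omega> = unit_root M d"
  have power_swap: "unit_root M j ^ d = \<omega> ^ j" for j
    unfolding \<omega>_def unit_root_def Complex.DeMoivre by (simp add: mult_ac)
  have roots: "bij_betw (unit_root M) {..<M} {z. z ^ M = 1}"
    unfolding unit_root_def using assms by (intro Complex.bij_betw_roots_unity) simp
  have "\<omega> \<noteq> unit_root M 0"
    unfolding \<omega>_def using inj_on_eq_iff[OF bij_betw_imp_inj_on[OF roots]] False assms by simp
  then have "\<omega> \<noteq> 1"
    by (simp add: unit_root_def)
  moreover have "\<omega> ^ M = 1"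
    using bij_betw_apply[OF roots] assms unfolding \<omega>_def by simp
  ultimately have "(\<Sum>j<M. \<omega> ^ j) = 0"
    by (simp add: geometric_sum)
  then show ?thesis
    using False by (simp add: power_swap)
qed simp

lemma power_mult_cnj_power:
  fixes z :: complex
  assumes "z * cnj z = 1"
  shows "z ^ p * cnj z ^ q = (if q \<le> p then z ^ (p - q) else cnj z ^ (q - p))"
proof (cases "q \<le> p")
  case True
  then obtain d where "p = q + d"
    using le_Suc_ex by blast
  then show ?thesis
    using assms by (simp add: power_add mult_ac flip: power_mult_distrib)
next
  case False
  then obtain d where "q = p + d"
    using le_Suc_ex[of p q] by auto
  then show ?thesis
    using assms by (simp add: power_add mult_ac flip: power_mult_distrib)
qed

lemma sum_unit_root_orthogonal:
  assumes "p < M" "q < M"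
  shows "(\<Sum>j<M. unit_root M j ^ p * cnj (unit_root M j) ^ q) = (if p = q then of_nat M else 0)"
proof (cases "q \<le> p")
  case True
  then show ?thesis
    using assms sum_unit_root_power[of "p - q" M] by (simp add: power_mult_cnj_power)
next
  case False
  then have "(\<Sum>j<M. unit_root M j ^ p * cnj (unit_root M j) ^ q) = cnj (\<Sum>j<M. unit_root M j ^ (q - p))"
    by (simp add: power_mult_cnj_power)
  then show ?thesis
    using False assms sum_unit_root_power[of "q - p" M] by simp
qed

section \<open>Polynomials with sparse exponents bounded on the circle\<close>

definition sparse_poly :: "('a \<Rightarrow> complex) \<Rightarrow> ('a \<Rightarrow> nat) \<Rightarrow> 'a set \<Rightarrow> complex \<Rightarrow> complex" where
  "sparse_poly a E K z = (\<Sum>k\<in>K. a k * z ^ E k)"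

definition autocorrelation :: "('a \<Rightarrow> complex) \<Rightarrow> ('a \<Rightarrow> nat) \<Rightarrow> 'a set \<Rightarrow> nat \<Rightarrow> complex" where
  "autocorrelation a E K D = (\<Sum>k\<in>K. \<Sum>k'\<in>K. if E k = E k' + D then a k * cnj (a k') else 0)"

lemma sum_unit_root_sparse_poly_norm_square:
  assumes "finite K" and "\<And>k. k \<in> K \<Longrightarrow> E k + D < M"
  shows "(\<Sum>j<M. sparse_poly a E K (unit_root M j) * cnj (sparse_poly a E K (unit_root M j))
                  * cnj (unit_root M j) ^ D)
       = of_nat M * autocorrelation a E K D"
proof -
  have expand: "sparse_poly a E K z * cnj (sparse_poly a E K z) * cnj z ^ D
      = (\<Sum>k\<in>K. \<Sum>k'\<in>K. a k * cnj (a k') * (z ^ E k * cnj z ^ (E k' + D)))" for z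
    by (simp add: sparse_poly_def sum_distrib_left sum_distrib_right power_add mult_ac)
       (rule sum.swap)
  have "(\<Sum>j<M. sparse_poly a E K (unit_root M j) * cnj (sparse_poly a E K (unit_root M j))
                  * cnj (unit_root M j) ^ D)
      = (\<Sum>k\<in>K. \<Sum>k'\<in>K. a k * cnj (a k') *
           (\<Sum>j<M. unit_root M j ^ E k * cnj (unit_root M j) ^ (E k' + D)))"
    unfolding expand sum_distrib_left by (subst sum.swap) (subst (2) sum.swap, rule refl)
  also have "\<dots> = (\<Sum>k\<in>K. \<Sum>k'\<in>K. a k * cnj (a k') * (if E k = E k' + D then of_nat M else 0))"
  proof (intro sum.cong refl)
    fix k k' assume "k \<in> K" "k' \<in> K"
    then have "E k < M" "E k' + D < M"
      using assms(2) add_lessD1 by blast+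
    then show "a k * cnj (a k') * (\<Sum>j<M. unit_root M j ^ E k * cnj (unit_root M j) ^ (E k' + D))
        = a k * cnj (a k') * (if E k = E k' + D then of_nat M else 0)"
      by (simp add: sum_unit_root_orthogonal)
  qed
  also have "\<dots> = of_nat M * autocorrelation a E K D"
    unfolding autocorrelation_def sum_distrib_left by (intro sum.cong refl) simp
  finally show ?thesis .
qed

lemma autocorrelation_0:
  assumes "finite K" and "inj_on E K"
  shows "autocorrelation a E K 0 = of_real (\<Sum>k\<in>K. (cmod (a k))\<^sup>2)"
proof -
  have "autocorrelation a E K 0 = (\<Sum>k\<in>K. a k * cnj (a k))"
    unfolding autocorrelation_def using assms
    by (intro sum.cong refl) (auto simp: inj_on_eq_iff if_distrib cong: if_cong)
  then show ?thesis
    by (simp only: of_real_sum complex_norm_square)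
qed

lemma autocorrelation_extreme_gap:
  fixes E :: "'a \<Rightarrow> nat"
  assumes K: "finite K" and inj: "inj_on E K" and "kx \<in> K" "kn \<in> K"
    and extreme: "\<And>k. k \<in> K \<Longrightarrow> a k \<noteq> 0 \<Longrightarrow> E kn \<le> E k \<and> E k \<le> E kx"
  shows "autocorrelation a E K (E kx - E kn) = a kx * cnj (a kn)"
proof -
  have "(if E k = E k' + (E kx - E kn) then a k * cnj (a k') else 0)
      = (if k = kx \<and> k' = kn then a kx * cnj (a kn) else 0)" if "k \<in> K" "k' \<in> K" for k k'
  proof (cases "a k \<noteq> 0 \<and> a k' \<noteq> 0")
    case True
    then have "E kn \<le> E k" "E k \<le> E kx" "E kn \<le> E k'" "E k' \<le> E kx"
      using extreme that by auto
    then have "E k = E k' + (E kx - E kn) \<longleftrightarrow> E k = E kx \<and> E k' = E kn"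
      by presburger
    also have "\<dots> \<longleftrightarrow> k = kx \<and> k' = kn"
      using inj that \<open>kx \<in> K\<close> \<open>kn \<in> K\<close> by (auto simp: inj_on_eq_iff)
    finally show ?thesis
      by auto
  qed auto
  then have "autocorrelation a E K (E kx - E kn)
      = (\<Sum>k\<in>K. if k = kx then (\<Sum>k'\<in>K. if k' = kn then a kx * cnj (a kn) else 0) else 0)"
    unfolding autocorrelation_def by (intro sum.cong refl) auto
  also have "\<dots> = a kx * cnj (a kn)"
    using K \<open>kx \<in> K\<close> \<open>kn \<in> K\<close> by simp
  finally show ?thesis .
qed

lemma sparse_poly_unimodular_at_unit_roots:
  assumes K: "finite K" and inj: "inj_on E K" and exps: "\<And>k. k \<in> K \<Longrightarrow> E k < M"
    and norm: "(\<Sum>k\<in>K. (cmod (a k))\<^sup>2) = 1"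
    and bounded: "\<And>z. cmod z = 1 \<Longrightarrow> cmod (sparse_poly a E K z) \<le> 1"
    and "j < M"
  shows "sparse_poly a E K (unit_root M j) * cnj (sparse_poly a E K (unit_root M j)) = 1"
proof -
  define r where "r j = (cmod (sparse_poly a E K (unit_root M j)))\<^sup>2" for j
  have r: "sparse_poly a E K (unit_root M j) * cnj (sparse_poly a E K (unit_root M j))
      = of_real (r j)" for j
    by (simp only: r_def complex_norm_square)
  have "autocorrelation a E K 0 = 1"
    using autocorrelation_0[OF K inj, of a] unfolding norm by simp
  then have "(\<Sum>j<M. complex_of_real (r j)) = of_nat M"
    using sum_unit_root_sparse_poly_norm_square[of K E 0 M a] K exps by (simp add: r)
  then have "(\<Sum>j<M. r j) = real M"
    by (metis of_real_eq_iff of_real_of_nat_eq of_real_sum)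
  then have "(\<Sum>j<M. 1 - r j) = 0"
    by (simp add: sum_subtractf)
  moreover have "r j \<le> 1" for j
    using bounded[of "unit_root M j"] by (simp add: r_def power_le_one)
  ultimately have "r j = 1"
    using sum_nonneg_eq_0_iff[of "{..<M}" "\<lambda>j. 1 - r j"] \<open>j < M\<close> by auto
  then show ?thesis
    by (simp add: r)
qed

lemma obtain_extreme_exponents:
  fixes E :: "'a \<Rightarrow> nat"
  assumes "finite T" and "T \<noteq> {}"
  obtains kx kn where "kx \<in> T" "kn \<in> T" "\<And>k. k \<in> T \<Longrightarrow> E kn \<le> E k \<and> E k \<le> E kx"
proof -
  obtain kx where "kx \<in> T" "E kx = Max (E ` T)"
    using Max_in[of "E ` T"] assms by fastforce
  moreover obtain kn where "kn \<in> T" "E kn = Min (E ` T)"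
    using Min_in[of "E ` T"] assms by fastforce
  ultimately show ?thesis
    using that assms(1) by simp
qed

lemma sparse_poly_circle_bounded_single_term:
  assumes K: "finite K" and inj: "inj_on E K"
    and norm: "(\<Sum>k\<in>K. (cmod (a k))\<^sup>2) = 1"
    and bounded: "\<And>z. cmod z = 1 \<Longrightarrow> cmod (sparse_poly a E K z) \<le> 1"
    and "k \<in> K" "l \<in> K" "a k \<noteq> 0" "a l \<noteq> 0"
  shows "k = l"
proof -
  define T where "T = {k \<in> K. a k \<noteq> 0}"
  have T: "finite T" "k \<in> T" "l \<in> T"
    using assms unfolding T_def by auto
  obtain kx kn where kx: "kx \<in> T" and kn: "kn \<in> T"
    and extreme_T: "\<And>k'. k' \<in> T \<Longrightarrow> E kn \<le> E k' \<and> E k' \<le> E kx"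
    using obtain_extreme_exponents[of T E] T by blast
  have extreme: "E kn \<le> E k' \<and> E k' \<le> E kx" if "k' \<in> K" "a k' \<noteq> 0" for k'
    using that extreme_T unfolding T_def by blast
  define B where "B = Max (E ` K)"
  define D where "D = E kx - E kn"
  \<comment> \<open>\<open>M\<close> exceeds every \<open>E k + D\<close>, so no aliasing occurs among the \<open>M\<close>-th roots of unity.\<close>
  define M where "M = 2 * B + 1"
  have "M \<noteq> 0"
    unfolding M_def by simp
  have EB: "E k' \<le> B" if "k' \<in> K" for k'
    using K that unfolding B_def by simp
  have "D \<le> B"
    using EB[of kx] kx unfolding D_def T_def by simp
  then have exps: "E k' + D < M" if "k' \<in> K" for k'
    using EB[OF that] unfolding M_def by simp
  have unimodular: "sparse_poly a E K (unit_root M j) * cnj (sparse_poly a E K (unit_root M j)) = 1"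
    if "j < M" for j
    by (rule sparse_poly_unimodular_at_unit_roots[OF K inj _ norm bounded that])
       (use exps add_lessD1 in blast)
  have "of_nat M * (a kx * cnj (a kn))
      = (\<Sum>j<M. sparse_poly a E K (unit_root M j) * cnj (sparse_poly a E K (unit_root M j))
                  * cnj (unit_root M j) ^ D)"
    using sum_unit_root_sparse_poly_norm_square[of K E D M a, OF K exps]
      autocorrelation_extreme_gap[of K E kx kn a, OF K inj _ _ extreme] kx kn
    unfolding D_def T_def by simp
  also have "\<dots> = (\<Sum>j<M. unit_root M j ^ 0 * cnj (unit_root M j) ^ D)"
    by (intro sum.cong refl) (simp add: unimodular)
  also have "\<dots> = (if D = 0 then of_nat M else 0)"
    using sum_unit_root_orthogonal[of 0 M D] \<open>D \<le> B\<close> unfolding M_def by auto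
  finally have "D = 0"
    using kx kn \<open>M \<noteq> 0\<close> unfolding T_def by (auto split: if_splits)
  moreover have "E kn \<le> E k \<and> E k \<le> E kx" "E kn \<le> E l \<and> E l \<le> E kx"
    using extreme assms(5-8) by auto
  ultimately have "E k = E l"
    unfolding D_def by arith
  then show "k = l"
    using inj \<open>k \<in> K\<close> \<open>l \<in> K\<close> by (simp add: inj_on_eq_iff)
qed

section \<open>Kronecker substitution\<close>

lemma sum_digits_less_power:
  fixes N :: nat
  assumes "\<And>r. r < n \<Longrightarrow> d r < N"
  shows "(\<Sum>r<n. d r * N ^ r) < N ^ n"
  using assms
proof (induction n)
  case (Suc n)
  then have "(\<Sum>r<Suc n. d r * N ^ r) < N ^ n + d n * N ^ n"
    by simp
  also have "\<dots> = (d n + 1) * N ^ n"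
    by simp
  also have "\<dots> \<le> N * N ^ n"
    using Suc.prems[of n] by (intro mult_right_mono) auto
  finally show ?case
    by simp
qed simp

lemma sum_digits_inj:
  fixes N :: nat
  assumes "\<And>r. r < n \<Longrightarrow> d r < N" and "\<And>r. r < n \<Longrightarrow> d' r < N"
    and "(\<Sum>r<n. d r * N ^ r) = (\<Sum>r<n. d' r * N ^ r)"
  shows "\<forall>r<n. d r = d' r"
  using assms
proof (induction n)
  case (Suc n)
  let ?S = "\<Sum>r<n. d r * N ^ r" and ?S' = "\<Sum>r<n. d' r * N ^ r"
  have low: "?S < N ^ n" "?S' < N ^ n"
    using Suc.prems by (auto intro: sum_digits_less_power)
  have eq: "?S + d n * N ^ n = ?S' + d' n * N ^ n"
    using Suc.prems(3) by simp
  have "?S = (?S + d n * N ^ n) mod N ^ n"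
    using low(1) by simp
  also have "\<dots> = (?S' + d' n * N ^ n) mod N ^ n"
    by (simp only: eq)
  also have "\<dots> = ?S'"
    using low(2) by simp
  finally have "?S = ?S'" .
  moreover have "N > 0"
    using Suc.prems(1)[of n] by simp
  ultimately have "d n = d' n"
    using eq by simp
  moreover have "\<forall>r<n. d r = d' r"
    by (rule Suc.IH) (use Suc.prems \<open>?S = ?S'\<close> in auto)
  ultimately show ?case
    by (auto simp: less_Suc_eq)
qed simp

lemma exponent_weights_inj:
  "\<exists>u :: 'n::finite \<Rightarrow> nat. inj_on (\<lambda>k. \<Sum>i\<in>UNIV. k i * u i) {k. \<forall>i. k i \<le> m}"
proof -
  obtain g :: "'n \<Rightarrow> nat" where g: "bij_betw g UNIV {..<CARD('n)}"
    using ex_bij_betw_finite_nat[of "UNIV :: 'n set"] by (auto simp: atLeast0LessThan)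
  define h where "h = inv_into UNIV g"
  have h: "bij_betw h {..<CARD('n)} UNIV"
    unfolding h_def by (rule bij_betw_inv_into[OF g])
  define N where "N = Suc m"
  have digits: "(\<Sum>i\<in>UNIV. k i * N ^ g i) = (\<Sum>r<CARD('n). k (h r) * N ^ r)" for k :: "'n \<Rightarrow> nat"
    using sum.reindex_bij_betw[OF h, of "\<lambda>i. k i * N ^ g i"] g
    by (simp add: h_def bij_betw_inv_into_right)
  have inj: "inj_on (\<lambda>k. \<Sum>i\<in>UNIV. k i * N ^ g i) {k. \<forall>i. k i \<le> m}"
  proof (rule inj_onI)
    fix k k' :: "'n \<Rightarrow> nat"
    assume "k \<in> {k. \<forall>i. k i \<le> m}" "k' \<in> {k. \<forall>i. k i \<le> m}"
      and eq: "(\<Sum>i\<in>UNIV. k i * N ^ g i) = (\<Sum>i\<in>UNIV. k' i * N ^ g i)"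
    then have "k i < N" "k' i < N" for i
      by (auto simp: N_def less_Suc_eq_le)
    moreover have "(\<Sum>r<CARD('n). k (h r) * N ^ r) = (\<Sum>r<CARD('n). k' (h r) * N ^ r)"
      using eq by (simp add: digits)
    ultimately have same_digits: "\<forall>r<CARD('n). k (h r) = k' (h r)"
      by (intro sum_digits_inj[of _ "\<lambda>r. k (h r)" N "\<lambda>r. k' (h r)"]) auto
    show "k = k'"
    proof
      fix i
      obtain r where "r < CARD('n)" "i = h r"
        using bij_betw_imp_surj_on[OF h] by blast
      then show "k i = k' i"
        using same_digits by simp
    qed
  qed
  show ?thesis
    by (rule exI[of _ "\<lambda>i. N ^ g i"]) (use inj in simp)
qed

lemma monom_val_powers: "monom_val (\<lambda>i. z ^ u i) k = z ^ (\<Sum>i\<in>UNIV. k i * u i)"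
  unfolding monom_val_def power_sum by (simp add: mult.commute flip: power_mult)

lemma torus_bounded_poly_single_term:
  fixes a :: "('n::finite \<Rightarrow> nat) \<Rightarrow> complex"
  assumes K: "finite K" and norm: "(\<Sum>k\<in>K. (cmod (a k))\<^sup>2) = 1"
    and bounded: "\<And>w. (\<And>i. cmod (w i) = 1) \<Longrightarrow> cmod (\<Sum>k\<in>K. a k * monom_val w k) \<le> 1"
    and "k \<in> K" "l \<in> K" "a k \<noteq> 0" "a l \<noteq> 0"
  shows "k = l"
proof -
  define b where "b = (\<Sum>k\<in>K. mdeg k)"
  have "k' i \<le> b" if "k' \<in> K" for k' i
    using le_mdeg[of k' i] member_le_sum[of k' K mdeg] K that unfolding b_def by linarith
  then have box: "K \<subseteq> {k. \<forall>i. k i \<le> b}"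
    by blast
  obtain u :: "'n \<Rightarrow> nat" where "inj_on (\<lambda>k. \<Sum>i\<in>UNIV. k i * u i) {k. \<forall>i. k i \<le> b}"
    using exponent_weights_inj by blast
  define E where "E = (\<lambda>k. \<Sum>i\<in>UNIV. k i * u i)"
  have inj: "inj_on E K"
    using \<open>inj_on _ _\<close> box unfolding E_def by (rule inj_on_subset)
  have "cmod (sparse_poly a E K z) \<le> 1" if "cmod z = 1" for z
    using bounded[of "\<lambda>i. z ^ u i"] that
    by (simp add: sparse_poly_def E_def monom_val_powers norm_power)
  then show ?thesis
    using sparse_poly_circle_bounded_single_term[OF K inj norm] assms(4-7) by blast
qed

theorem corollary3p3:
  fixes a :: "('n::finite \<Rightarrow> nat) \<Rightarrow> complex" and m :: nat
  assumes "CARD('n) > 1"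
    and "a \<in> Hhom m"
    and "h2norm_poly m a = 1"
    and "k \<noteq> l" and "a k \<noteq> 0" and "a l \<noteq> 0"
  shows "\<not> (\<exists>c. schur_class c \<and> same_compression m a c)"
proof
  assume "\<exists>c. schur_class c \<and> same_compression m a c"
  then obtain c where "schur_class c" and "same_compression m a c"
    by blast
  have norm: "(\<Sum>k | mdeg k \<le> m. (cmod (a k))\<^sup>2) = 1"
    using assms(3) unfolding h2norm_poly_def by simp
  have bound: "cmod (\<Sum>k | mdeg k \<le> m. a k * monom_val w k) \<le> 1" if "\<And>i. cmod (w i) = 1" for w
    using same_compression_torus_bound[OF \<open>schur_class c\<close> \<open>same_compression m a c\<close> assms(2)] that
    by simp
  have "k \<in> {k. mdeg k \<le> m}" "l \<in> {k. mdeg k \<le> m}"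
    using assms(2,5,6) unfolding Hhom_def by auto
  then have "k = l"
    using torus_bounded_poly_single_term[OF finite_mdeg_le norm bound] assms(5,6) by blast
  with assms(4) show False ..
qed

end
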